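(* Let $\lambda>0$, $\beta>0$, $\epsilon>0$ and a positive integer $\gamma$ be fixed with $0<\epsilon<\gamma^2\beta/4$, and for each $r>0$ let $(Y^r,X^r)$ be the continuous-time Markov chain described in the context. For all sufficiently large $r$, the process $(Y^r,X^r)$ (and hence $(\bar Y^r,\bar X^r)=r^{-1}(Y^r,X^r-\lambda r/\beta)$) is stable (positive recurrent) with a unique stationary distribution, and the sequence of stationary distributions of $(\bar Y^r,\bar X^r)$ is tight.
   Context: Model: For scaling parameter $r>0$, the process $(Y^r(t),X^r(t))$, $t\ge0$, is a continuous-time Markov chain on $\mathbb{Z}\times\mathbb{Z}_+$ whose transitions from state $(Y,X)$ are: (i) at rate $\lambda r$: $Y\mapsto Y-1$, $X\mapsto X+\gamma$; (ii) at rate $\beta X$: $Y\mapsto Y+1$, $X\mapsto X-(\gamma\wedge X)$; (iii) at rate $\epsilon|Y|$: if $X\ge1$, $X\mapsto X-\mathrm{sgn}(Y)$ ($Y$ unchanged); if $X=0$, $X\mapsto X+1$ when $Y<0$ and no change when $Y\ge0$. Here $\mathrm{sgn}(z)=1,0,-1$ for $z>0$, $z=0$, $z<0$, and $a\wedge b=\min\{a,b\}$. *)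

theory Defs
  imports "HOL-Probability.Probability"
begin

type_synonym state = "int \<times> nat"

definition arr_target :: "nat \<Rightarrow> state \<Rightarrow> state" where
  "arr_target gam s = (fst s - 1, snd s + gam)"

definition srv_target :: "nat \<Rightarrow> state \<Rightarrow> state" where
  "srv_target gam s = (fst s + 1, snd s - min gam (snd s))"

definition eps_target :: "state \<Rightarrow> state" where
  "eps_target s = (if snd s \<ge> 1 then (fst s, nat (int (snd s) - sgn (fst s)))
                   else if fst s < 0 then (fst s, 1) else s)"

definition rate :: "real \<Rightarrow> real \<Rightarrow> real \<Rightarrow> nat \<Rightarrow> real \<Rightarrow> state \<Rightarrow> state \<Rightarrow> real" where
  "rate lam bet eps gam r s t =
     (if t = s then 0 else
        (if t = arr_target gam s then lam * r else 0)
      + (if t = srv_target gam s then bet * real (snd s) else 0)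
      + (if t = eps_target s then eps * real_of_int \<bar>fst s\<bar> else 0))"

definition targets :: "nat \<Rightarrow> state \<Rightarrow> state set" where
  "targets gam s = {arr_target gam s, srv_target gam s, eps_target s}"

definition qout :: "real \<Rightarrow> real \<Rightarrow> real \<Rightarrow> nat \<Rightarrow> real \<Rightarrow> state \<Rightarrow> real" where
  "qout lam bet eps gam r s = (\<Sum>t\<in>targets gam s. rate lam bet eps gam r s t)"

definition stationary :: "real \<Rightarrow> real \<Rightarrow> real \<Rightarrow> nat \<Rightarrow> real \<Rightarrow> state pmf \<Rightarrow> bool" where
  "stationary lam bet eps gam r \<pi> \<longleftrightarrow>
     (\<forall>s. ((\<lambda>u. pmf \<pi> u * rate lam bet eps gam r u s) has_sum
            (pmf \<pi> s * qout lam bet eps gam r s)) UNIV)"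

definition jump :: "real \<Rightarrow> real \<Rightarrow> real \<Rightarrow> nat \<Rightarrow> real \<Rightarrow> state \<Rightarrow> state \<Rightarrow> ennreal" where
  "jump lam bet eps gam r u t = ennreal (rate lam bet eps gam r u t / qout lam bet eps gam r u)"

text \<open>Taboo probabilities: taboo s n t = P_s(Z_n = t, Z_k \<noteq> s for 1 \<le> k \<le> n),
  Z the jump chain started at s.\<close>
primrec taboo :: "real \<Rightarrow> real \<Rightarrow> real \<Rightarrow> nat \<Rightarrow> real \<Rightarrow> state \<Rightarrow> nat \<Rightarrow> state \<Rightarrow> ennreal" where
  "taboo lam bet eps gam r s 0 t = (if t = s then 1 else 0)"
| "taboo lam bet eps gam r s (Suc n) t =
     (if t = s then 0 else
        (\<Sum>\<^sub>\<infinity>u. taboo lam bet eps gam r s n u * jump lam bet eps gam r u t))"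

definition return_prob :: "real \<Rightarrow> real \<Rightarrow> real \<Rightarrow> nat \<Rightarrow> real \<Rightarrow> state \<Rightarrow> ennreal" where
  "return_prob lam bet eps gam r s =
     (\<Sum>\<^sub>\<infinity>n. \<Sum>\<^sub>\<infinity>u. taboo lam bet eps gam r s n u * jump lam bet eps gam r u s)"

text \<open>Expected (continuous) time until the first return to s: sum of the mean
  holding times 1/q(Z_k) over k < T, T the first return index of the jump chain.\<close>
definition mean_return_time :: "real \<Rightarrow> real \<Rightarrow> real \<Rightarrow> nat \<Rightarrow> real \<Rightarrow> state \<Rightarrow> ennreal" where
  "mean_return_time lam bet eps gam r s =
     (\<Sum>\<^sub>\<infinity>n. \<Sum>\<^sub>\<infinity>u. taboo lam bet eps gam r s n u * ennreal (1 / qout lam bet eps gam r u))"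

definition pos_recurrent :: "real \<Rightarrow> real \<Rightarrow> real \<Rightarrow> nat \<Rightarrow> real \<Rightarrow> state \<Rightarrow> bool" where
  "pos_recurrent lam bet eps gam r s \<longleftrightarrow>
     return_prob lam bet eps gam r s = 1 \<and> mean_return_time lam bet eps gam r s < \<infinity>"

definition scaled :: "real \<Rightarrow> real \<Rightarrow> real \<Rightarrow> state \<Rightarrow> real \<times> real" where
  "scaled lam bet r s = (real_of_int (fst s) / r, (real (snd s) - lam * r / bet) / r)"

end

theory Submission
  imports Defs
begin

text \<open>For large r the chain is analysed through the quadratic Lyapunov function
  V = A Y^2 + gam Y (X - c) + (X - c)^2 with c = lam r / bet and A = gam^2/2 + eps/bet, which is
  nonnegative because A \<ge> gam^2/4. Its drift is at most -eps c (|Y| + |X - c|) + B c^2 for a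
  constant B independent of r. Outside a finite set the drift is below -q, so the expected number
  of visits during an excursion from a base state s0 is finite (Foster's criterion); since every
  state reaches s0, the occupation measure of an excursion, divided by the holding rates and
  normalised, is the unique stationary distribution and its support is positive recurrent.
  The same drift inequality, summed against the stationary law, bounds the stationary mean of
  eps c (|Y| + |X - c|) by a multiple of c^2, so Markov's inequality makes the scaled
  stationary laws uniformly tight.\<close>

text \<open>Sums of nonnegative families over a countable type, taken as integrals against counting
  measure so that linearity, monotone convergence and Fubini are available.\<close>
definition esum :: "('a \<Rightarrow> ennreal) \<Rightarrow> ennreal" where
  "esum f = (\<integral>\<^sup>+x. f x \<partial>count_space UNIV)"

lemma esum_nat: "esum (f :: nat \<Rightarrow> ennreal) = (\<Sum>i. f i)"
  unfolding esum_def by (rule nn_integral_count_space_nat)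

lemma infsum_nat_eq_esum: "infsum (f :: nat \<Rightarrow> ennreal) UNIV = esum f"
proof -
  have "f summable_on UNIV" by (rule nonneg_summable_on_complete) simp
  then have "f sums infsum f UNIV"
    using has_sum_imp_sums has_sum_infsum by blast
  then show ?thesis by (simp add: esum_nat sums_unique)
qed

lemma infsum_eq_esum:
  fixes f :: "'a::countable \<Rightarrow> ennreal"
  assumes "infinite (UNIV :: 'a set)"
  shows "infsum f UNIV = esum f"
proof -
  let ?g = "from_nat_into (UNIV :: 'a set)"
  have b: "bij_betw ?g UNIV UNIV"
    using bij_betw_from_nat_into[OF countableI_type assms] .
  have "infsum f UNIV = infsum (\<lambda>n. f (?g n)) UNIV"
    using infsum_reindex_bij_betw[OF b, of f] by simp
  also have "\<dots> = esum (\<lambda>n. f (?g n))" by (rule infsum_nat_eq_esum)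
  also have "\<dots> = esum f"
    unfolding esum_def by (rule nn_integral_bij_count_space[OF b])
  finally show ?thesis .
qed

lemma infinite_UNIV_state: "infinite (UNIV :: state set)"
  by (simp add: finite_prod)

lemma infsum_state_eq_esum: "infsum (f :: state \<Rightarrow> ennreal) UNIV = esum f"
  by (rule infsum_eq_esum[OF infinite_UNIV_state])

lemma esum_add: "esum (\<lambda>x. f x + g x) = esum f + esum g"
  unfolding esum_def by (rule nn_integral_add) auto

lemma esum_cmult: "esum (\<lambda>x. c * f x) = c * esum f"
  unfolding esum_def by (rule nn_integral_cmult) auto

lemma esum_cmult_right: "esum (\<lambda>x. f x * c) = esum f * c"
  using esum_cmult[of c f] by (simp add: mult.commute)

lemma esum_mono: "(\<And>x. f x \<le> g x) \<Longrightarrow> esum f \<le> esum g"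
  unfolding esum_def by (rule nn_integral_mono) auto

lemma esum_swap:
  fixes f :: "'a::countable \<Rightarrow> 'b \<Rightarrow> ennreal"
  shows "esum (\<lambda>y. esum (\<lambda>x. f x y)) = esum (\<lambda>x. esum (\<lambda>y. f x y))"
  unfolding esum_def by (rule nn_integral_count_space_nn_integral) auto

lemma esum_finite_support:
  "finite A \<Longrightarrow> (\<And>x. x \<notin> A \<Longrightarrow> f x = 0) \<Longrightarrow> esum f = sum f A"
  unfolding esum_def by (rule nn_integral_count_space') auto

lemma esum_single: "esum (\<lambda>x. if x = a then c else 0) = c"
  by (subst esum_finite_support[of "{a}"]) auto

lemma esum_ge_term: "f a \<le> esum f"
proof -
  have "esum (\<lambda>x. if x = a then f a else 0) \<le> esum f"
    by (rule esum_mono) auto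
  then show ?thesis by (simp add: esum_single)
qed

lemma esum_split_point: "esum f = esum (\<lambda>t. if t = s then 0 else f t) + f s"
proof -
  have "f = (\<lambda>t. (if t = s then 0 else f t) + (if t = s then f s else 0))"
    by auto
  then show ?thesis by (metis (no_types) esum_add esum_single)
qed

lemma esum_sum: "finite A \<Longrightarrow> esum (\<lambda>u. \<Sum>n\<in>A. f n u) = (\<Sum>n\<in>A. esum (f n))"
  unfolding esum_def by (rule nn_integral_sum) auto

lemma esum_pmf: "esum (\<lambda>x. ennreal (pmf p x)) = 1"
  unfolding esum_def nn_integral_pmf by (simp add: measure_pmf.emeasure_space_1[simplified])

lemma esum_ennreal_eq_if_has_sum:
  fixes f :: "'a::countable \<Rightarrow> real"
  assumes "(f has_sum x) UNIV" "\<And>u. f u \<ge> 0" "infinite (UNIV :: 'a set)"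
  shows "esum (\<lambda>u. ennreal (f u)) = ennreal x"
proof -
  have fs: "f summable_on UNIV" using assms(1) by (auto simp: summable_on_def)
  have "ennreal (infsum f UNIV) = (SUP F\<in>{F. finite F \<and> F \<subseteq> UNIV}. ennreal (sum f F))"
    by (rule infsum_nonneg_is_SUPREMUM_ennreal[OF fs]) (use assms in auto)
  also have "\<dots> = (SUP F\<in>{F. finite F \<and> F \<subseteq> UNIV}. sum (\<lambda>u. ennreal (f u)) F)"
    by (rule SUP_cong) (auto simp: sum_ennreal assms)
  also have "\<dots> = infsum (\<lambda>u. ennreal (f u)) UNIV"
    by (rule nonneg_infsum_complete[symmetric]) auto
  also have "\<dots> = esum (\<lambda>u. ennreal (f u))"
    by (rule infsum_eq_esum[OF assms(3)])
  finally show ?thesis using assms(1) by (simp add: infsumI)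
qed

lemma has_sum_if_esum_ennreal_eq:
  fixes f :: "'a::countable \<Rightarrow> real"
  assumes sum: "esum (\<lambda>u. ennreal (f u)) = ennreal x"
    and nonneg: "\<And>u. f u \<ge> 0" "x \<ge> 0" and inf: "infinite (UNIV :: 'a set)"
  shows "(f has_sum x) UNIV"
proof -
  have "sum f F \<le> x" if "finite F" for F
  proof -
    have "ennreal (sum f F) = esum (\<lambda>u. if u \<in> F then ennreal (f u) else 0)"
      using that nonneg by (subst esum_finite_support[of F]) (auto simp: sum_ennreal)
    also have "\<dots> \<le> esum (\<lambda>u. ennreal (f u))" by (rule esum_mono) auto
    finally show ?thesis using sum nonneg by simp
  qed
  then have "f summable_on UNIV"
    by (intro nonneg_bdd_above_summable_on) (use nonneg in \<open>auto simp: bdd_above_def\<close>)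
  then have hs: "(f has_sum infsum f UNIV) UNIV" by (simp add: has_sum_infsum)
  moreover have "ennreal (infsum f UNIV) = ennreal x"
    using esum_ennreal_eq_if_has_sum[OF hs nonneg(1) inf] sum by simp
  moreover have "infsum f UNIV \<ge> 0" using nonneg by (simp add: infsum_nonneg)
  ultimately show ?thesis using nonneg by simp
qed

lemma suminf_ennreal_split_head: "(\<Sum>n. f n) = f 0 + (\<Sum>n. f (Suc n) :: ennreal)"
proof -
  have "f sums ((\<Sum>n. f (Suc n)) + f 0)"
    by (rule sums_Suc) (rule summable_sums, simp)
  then show ?thesis by (simp add: sums_iff add.commute)
qed

locale chain_params =
  fixes lam bet eps :: real and gam :: nat and r :: real
begin

abbreviation "rt \<equiv> rate lam bet eps gam r"
abbreviation "q \<equiv> qout lam bet eps gam r"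
abbreviation "P \<equiv> jump lam bet eps gam r"
abbreviation "tab \<equiv> taboo lam bet eps gam r"
abbreviation "E \<equiv> (\<lambda>u w. 0 < P u w)"
abbreviation "reaches \<equiv> E\<^sup>*\<^sup>*"

end

locale jump_chain = chain_params +
  assumes esum_jump: "\<And>u. esum (P u) = 1"
begin

definition "taboo_mass s n = esum (tab s n)"
definition "return_mass s n = esum (\<lambda>u. tab s n u * P u s)"

text \<open>The expected number of visits to t during an excursion from s: up to normalisation the
  invariant measure of the jump chain when s is recurrent.\<close>
definition "visits s t = esum (\<lambda>n. tab s n t)"

lemma taboo_Suc: "tab s (Suc n) t = (if t = s then 0 else esum (\<lambda>u. tab s n u * P u t))"
  by (simp only: taboo.simps infsum_state_eq_esum)

declare taboo.simps(2)[simp del]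

lemma taboo_0: "tab s 0 = (\<lambda>t. if t = s then 1 else 0)"
  by (simp add: fun_eq_iff)

lemma taboo_mass_Suc: "taboo_mass s (Suc n) + return_mass s n = taboo_mass s n"
proof -
  let ?F = "\<lambda>t. esum (\<lambda>u. tab s n u * P u t)"
  have "esum ?F = esum (\<lambda>u. tab s n u * esum (P u))"
    by (subst esum_swap) (simp add: esum_cmult)
  then have total: "esum ?F = taboo_mass s n" by (simp add: esum_jump taboo_mass_def)
  have "esum (\<lambda>t. if t = s then 0 else ?F t) = taboo_mass s (Suc n)"
    unfolding taboo_mass_def by (rule arg_cong[where f = esum]) (auto simp: taboo_Suc fun_eq_iff)
  then show ?thesis using esum_split_point[of ?F s] total by (simp add: return_mass_def)
qed

lemma return_mass_partial_sum: "(\<Sum>n<N. return_mass s n) + taboo_mass s N = 1"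
proof (induction N)
  case 0 then show ?case by (simp add: taboo_mass_def taboo_0 esum_single)
next
  case (Suc N)
  have "(\<Sum>n<Suc N. return_mass s n) + taboo_mass s (Suc N)
      = (\<Sum>n<N. return_mass s n) + (taboo_mass s (Suc N) + return_mass s N)"
    by (simp add: algebra_simps)
  then show ?case using Suc by (simp add: taboo_mass_Suc)
qed

lemma return_prob_eq: "return_prob lam bet eps gam r s = (\<Sum>n. return_mass s n)"
  unfolding return_prob_def return_mass_def
  by (simp add: infsum_nat_eq_esum esum_nat infsum_state_eq_esum)

lemma return_prob_le_1: "return_prob lam bet eps gam r s \<le> 1"
  unfolding return_prob_eq
proof (rule suminf_le_const)
  fix N
  show "(\<Sum>n<N. return_mass s n) \<le> 1"
    using return_mass_partial_sum[where N = N and s = s] by (metis le_iff_add)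
qed simp

lemma esum_visits: "esum (visits s) = (\<Sum>n. taboo_mass s n)"
  unfolding visits_def[abs_def] taboo_mass_def by (subst esum_swap) (simp add: esum_nat)

text \<open>Finitely many expected visits force the taboo masses to vanish, and the mass lost
  from the taboo chain is exactly the return probability.\<close>
lemma return_prob_eq_1_if_finite_visits:
  assumes fin: "esum (visits s) < \<infinity>"
  shows "return_prob lam bet eps gam r s = 1"
proof -
  obtain S where S: "(\<Sum>n. taboo_mass s n) = ennreal S" "S \<ge> 0"
    using fin esum_visits by (metis ennreal_cases less_irrefl infinity_ennreal_def)
  have small: "\<exists>N. taboo_mass s N \<le> ennreal e" if e: "e > 0" for e
  proof (rule ccontr)
    assume "\<not> ?thesis"
    then have gt: "\<And>N. ennreal e < taboo_mass s N" by (simp add: not_le)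
    obtain N :: nat where N: "S < real N * e"
      using reals_Archimedean3[OF e] by blast
    have "ennreal (real N * e) = (\<Sum>n<N. ennreal e)"
      using e by (simp add: ennreal_of_nat_eq_real_of_nat ennreal_mult)
    also have "\<dots> \<le> (\<Sum>n<N. taboo_mass s n)"
      by (rule sum_mono) (use gt in \<open>auto intro: less_imp_le\<close>)
    also have "\<dots> \<le> (\<Sum>n. taboo_mass s n)" by (rule sum_le_suminf) auto
    finally have "real N * e \<le> S" using S e by (simp add: ennreal_le_iff)
    then show False using N by simp
  qed
  have "1 \<le> return_prob lam bet eps gam r s"
  proof (rule ennreal_le_epsilon)
    fix e :: real assume "0 < e"
    then obtain N where N: "taboo_mass s N \<le> ennreal e" using small by blast
    have "1 = (\<Sum>n<N. return_mass s n) + taboo_mass s N"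
      using return_mass_partial_sum[where N = N and s = s] by simp
    also have "\<dots> \<le> return_prob lam bet eps gam r s + ennreal e"
      unfolding return_prob_eq by (rule add_mono[OF sum_le_suminf N]) auto
    finally show "1 \<le> return_prob lam bet eps gam r s + ennreal e" .
  qed
  then show ?thesis using return_prob_le_1[of s] by simp
qed

lemma visits_self: "visits s s = 1"
  unfolding visits_def esum_nat by (subst suminf_ennreal_split_head) (simp add: taboo_Suc)

lemma suminf_esum_taboo: "(\<Sum>n. esum (\<lambda>u. tab s n u * f u)) = esum (\<lambda>u. visits s u * f u)"
  unfolding esum_nat[symmetric] visits_def by (subst esum_swap) (simp add: esum_cmult_right)

lemma esum_visits_jump:
  "esum (\<lambda>u. visits s u * P u t) = (if t = s then return_prob lam bet eps gam r s else visits s t)"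
proof (cases "t = s")
  case True then show ?thesis
    by (simp add: suminf_esum_taboo[symmetric] return_prob_eq return_mass_def)
next
  case False
  have "visits s t = (\<Sum>n. tab s (Suc n) t)"
    unfolding visits_def esum_nat using False by (subst suminf_ennreal_split_head) simp
  then show ?thesis using False by (simp add: taboo_Suc suminf_esum_taboo)
qed

lemma visits_jump_le:
  "visits s u * P u t \<le> (if t = s then return_prob lam bet eps gam r s else visits s t)"
  using esum_ge_term[of "\<lambda>u. visits s u * P u t" u] esum_visits_jump[of s t] by simp

lemma mean_return_time_eq:
  "mean_return_time lam bet eps gam r s = esum (\<lambda>u. visits s u * ennreal (1 / q u))"
  unfolding mean_return_time_def
  by (simp add: infsum_nat_eq_esum infsum_state_eq_esum esum_nat suminf_esum_taboo)

lemma taboo_drift_step: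
  fixes V g h :: "state \<Rightarrow> ennreal"
  assumes drift: "\<And>u. esum (\<lambda>t. P u t * V t) + g u \<le> V u + h u"
  shows "esum (\<lambda>t. tab s (Suc n) t * V t) + esum (\<lambda>t. tab s n t * g t)
    \<le> esum (\<lambda>t. tab s n t * V t) + esum (\<lambda>t. tab s n t * h t)"
proof -
  have "esum (\<lambda>t. tab s (Suc n) t * V t) \<le> esum (\<lambda>t. esum (\<lambda>u. tab s n u * P u t) * V t)"
    by (rule esum_mono) (auto simp: taboo_Suc)
  also have "\<dots> = esum (\<lambda>t. esum (\<lambda>u. tab s n u * (P u t * V t)))"
    by (simp add: esum_cmult_right mult.assoc[symmetric])
  also have "\<dots> = esum (\<lambda>u. tab s n u * esum (\<lambda>t. P u t * V t))"
    by (subst esum_swap) (simp add: esum_cmult)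
  finally have "esum (\<lambda>t. tab s (Suc n) t * V t) + esum (\<lambda>t. tab s n t * g t)
      \<le> esum (\<lambda>u. tab s n u * (esum (\<lambda>t. P u t * V t) + g u))"
    by (simp add: esum_add distrib_left add_right_mono)
  also have "\<dots> \<le> esum (\<lambda>u. tab s n u * (V u + h u))"
    by (rule esum_mono) (rule mult_left_mono[OF drift], simp)
  finally show ?thesis by (simp add: esum_add distrib_left)
qed

text \<open>The comparison theorem, summed over an excursion from s.\<close>
lemma visits_drift_bound:
  fixes V g h :: "state \<Rightarrow> ennreal"
  assumes drift: "\<And>u. esum (\<lambda>t. P u t * V t) + g u \<le> V u + h u"
  shows "esum (\<lambda>u. visits s u * g u) \<le> V s + esum (\<lambda>u. visits s u * h u)"
proof -
  define A where "A N = esum (\<lambda>t. tab s N t * V t)" for N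
  define G where "G n = esum (\<lambda>t. tab s n t * g t)" for n
  define H where "H n = esum (\<lambda>t. tab s n t * h t)" for n
  have partial: "A N + (\<Sum>n<N. G n) \<le> V s + (\<Sum>n<N. H n)" for N
  proof (induction N)
    case 0
    have "A 0 = esum (\<lambda>t. if t = s then V s else 0)"
      unfolding A_def by (rule arg_cong[where f = esum]) (simp add: taboo_0 fun_eq_iff)
    then show ?case by (simp add: esum_single)
  next
    case (Suc N)
    have "A (Suc N) + (\<Sum>n<Suc N. G n) = (A (Suc N) + G N) + (\<Sum>n<N. G n)"
      by (simp add: algebra_simps)
    also have "\<dots> \<le> (A N + H N) + (\<Sum>n<N. G n)"
      unfolding A_def G_def H_def by (rule add_right_mono[OF taboo_drift_step[OF drift]])
    also have "\<dots> = (A N + (\<Sum>n<N. G n)) + H N" by (simp add: algebra_simps)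
    also have "\<dots> \<le> (V s + (\<Sum>n<N. H n)) + H N" by (rule add_right_mono[OF Suc])
    also have "\<dots> = V s + (\<Sum>n<Suc N. H n)" by (simp add: algebra_simps)
    finally show ?case .
  qed
  have "(\<Sum>n. G n) \<le> V s + (\<Sum>n. H n)"
  proof (rule suminf_le_const)
    fix N
    have "(\<Sum>n<N. G n) \<le> A N + (\<Sum>n<N. G n)" by simp
    also have "\<dots> \<le> V s + (\<Sum>n<N. H n)" by (rule partial)
    also have "\<dots> \<le> V s + (\<Sum>n. H n)" by (rule add_left_mono, rule sum_le_suminf) auto
    finally show "(\<Sum>n<N. G n) \<le> V s + (\<Sum>n. H n)" .
  qed simp
  then show ?thesis by (simp add: G_def H_def suminf_esum_taboo)
qed

lemma visits_le_subinvariant: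
  fixes \<mu> :: "state \<Rightarrow> ennreal"
  assumes inv: "\<And>t. esum (\<lambda>u. \<mu> u * P u t) \<le> \<mu> t"
  shows "\<mu> s * visits s t \<le> \<mu> t"
proof -
  have partial: "\<mu> s * (\<Sum>n<N. tab s n t) \<le> \<mu> t" for N t
  proof (induction N arbitrary: t)
    case 0 then show ?case by simp
  next
    case (Suc N)
    show ?case
    proof (cases "t = s")
      case True
      then have "(\<Sum>n<Suc N. tab s n t) = 1"
        by (subst sum.lessThan_Suc_shift) (simp add: taboo_Suc)
      then show ?thesis using True by simp
    next
      case False
      then have "(\<Sum>n<Suc N. tab s n t) = esum (\<lambda>u. (\<Sum>n<N. tab s n u) * P u t)"
        by (subst sum.lessThan_Suc_shift) (simp add: taboo_Suc esum_sum sum_distrib_right)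
      then have "\<mu> s * (\<Sum>n<Suc N. tab s n t) = esum (\<lambda>u. (\<mu> s * (\<Sum>n<N. tab s n u)) * P u t)"
        by (simp add: esum_cmult mult.assoc)
      also have "\<dots> \<le> esum (\<lambda>u. \<mu> u * P u t)"
        by (rule esum_mono) (rule mult_right_mono[OF Suc.IH], simp)
      also have "\<dots> \<le> \<mu> t" by (rule inv)
      finally show ?thesis .
    qed
  qed
  have "\<mu> s * visits s t = (SUP N. \<mu> s * (\<Sum>n<N. tab s n t))"
    by (simp add: visits_def esum_nat suminf_eq_SUP SUP_mult_left_ennreal)
  also have "\<dots> \<le> \<mu> t" by (rule SUP_least) (rule partial)
  finally show ?thesis .
qed

lemma visits_finite_if_reaches:
  assumes "reaches u s"
  shows "visits s u < \<infinity>"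
  using assms
proof (induction rule: converse_rtranclp_induct)
  case base then show ?case by (simp add: visits_self)
next
  case (step u w)
  have "visits s u * P u w < \<infinity>"
  proof (cases "w = s")
    case True
    then have "visits s u * P u w \<le> 1"
      using visits_jump_le[of s u w] return_prob_le_1[of s] by simp
    then show ?thesis by (simp add: le_less_trans)
  next
    case False
    then have "visits s u * P u w \<le> visits s w" using visits_jump_le[of s u w] by simp
    then show ?thesis using step.IH by (simp add: le_less_trans)
  qed
  then show ?case using step.hyps(1) by (auto simp: ennreal_mult_less_top)
qed

lemma zero_if_reaches_zero:
  fixes \<delta> :: "state \<Rightarrow> ennreal"
  assumes le: "\<And>u w. \<delta> u * P u w \<le> \<delta> w" and zero: "\<delta> s = 0" and reach: "reaches u s"
  shows "\<delta> u = 0"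
  using reach
proof (induction rule: converse_rtranclp_induct)
  case base then show ?case using zero .
next
  case (step u w)
  then have "\<delta> u * P u w = 0" using le[of u w] by simp
  then show ?case using step.hyps(1) by (metis mult_eq_0_iff order_less_irrefl)
qed

lemma pos_recurrent_if_subinvariant:
  fixes \<mu> :: "state \<Rightarrow> ennreal"
  assumes inv: "\<And>t. esum (\<lambda>u. \<mu> u * P u t) \<le> \<mu> t"
    and pos: "0 < \<mu> s" and mass: "esum \<mu> < \<infinity>"
    and time: "esum (\<lambda>u. \<mu> u * ennreal (1 / q u)) < \<infinity>"
  shows "pos_recurrent lam bet eps gam r s"
proof -
  note le = visits_le_subinvariant[OF inv]
  have "\<mu> s * esum (visits s) \<le> esum \<mu>"
    unfolding esum_cmult[symmetric] by (rule esum_mono[OF le])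
  then have "\<mu> s * esum (visits s) < \<infinity>" using mass by (rule le_less_trans)
  then have "esum (visits s) < \<infinity>" using pos by (auto simp: ennreal_mult_less_top)
  then have ret: "return_prob lam bet eps gam r s = 1"
    by (rule return_prob_eq_1_if_finite_visits)
  have "\<mu> s * mean_return_time lam bet eps gam r s = esum (\<lambda>u. (\<mu> s * visits s u) * ennreal (1 / q u))"
    by (simp add: mean_return_time_eq esum_cmult mult.assoc)
  also have "\<dots> \<le> esum (\<lambda>u. \<mu> u * ennreal (1 / q u))"
    by (rule esum_mono) (rule mult_right_mono[OF le], simp)
  finally have "\<mu> s * mean_return_time lam bet eps gam r s < \<infinity>"
    using time by (rule le_less_trans)
  then have "mean_return_time lam bet eps gam r s < \<infinity>"
    using pos by (auto simp: ennreal_mult_less_top)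
  then show ?thesis using ret by (simp add: pos_recurrent_def)
qed

text \<open>Uniqueness of invariant measures: the excess over the visit measure is
  subinvariant and vanishes at s, hence everywhere upstream of s.\<close>
lemma invariant_eq_visits:
  fixes \<mu> :: "state \<Rightarrow> ennreal"
  assumes inv: "\<And>t. esum (\<lambda>u. \<mu> u * P u t) = \<mu> t"
    and fin: "\<And>t. \<mu> t < \<infinity>"
    and ret: "return_prob lam bet eps gam r s = 1"
    and reach: "\<And>u. reaches u s"
  shows "\<mu> t = \<mu> s * visits s t"
proof -
  have le: "\<mu> s * visits s t \<le> \<mu> t" for t by (rule visits_le_subinvariant) (simp add: inv)
  have visits_inv: "esum (\<lambda>u. visits s u * P u w) = visits s w" for w
    using esum_visits_jump[of s w] ret visits_self[of s] by simp
  define \<delta> where "\<delta> t = \<mu> t - \<mu> s * visits s t" for t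
  have sub: "\<delta> u * P u w \<le> \<delta> w" for u w
  proof -
    have "esum (\<lambda>u. \<delta> u * P u w) + \<mu> s * visits s w
        = esum (\<lambda>u. \<delta> u * P u w) + esum (\<lambda>u. (\<mu> s * visits s u) * P u w)"
      by (simp add: visits_inv esum_cmult mult.assoc)
    also have "\<dots> = esum (\<lambda>u. (\<delta> u + \<mu> s * visits s u) * P u w)"
      by (simp add: esum_add distrib_right)
    also have "\<dots> = esum (\<lambda>u. \<mu> u * P u w)"
      by (simp add: \<delta>_def diff_add_cancel_ennreal[OF le])
    also have "\<dots> = \<mu> w" by (rule inv)
    finally have eq: "esum (\<lambda>u. \<delta> u * P u w) + \<mu> s * visits s w = \<mu> w" .
    have "\<mu> s * visits s w \<noteq> \<infinity>" using le[of w] fin[of w] by (auto simp: top_unique)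
    then have "esum (\<lambda>u. \<delta> u * P u w) = \<delta> w"
      using eq unfolding \<delta>_def by (metis ennreal_add_diff_cancel)
    then show ?thesis using esum_ge_term[of "\<lambda>u. \<delta> u * P u w" u] by simp
  qed
  have "\<delta> s = 0" using fin[of s] by (simp add: \<delta>_def visits_self)
  then have "\<delta> t = 0" by (rule zero_if_reaches_zero[OF sub _ reach])
  then have "\<mu> t \<le> \<mu> s * visits s t" unfolding \<delta>_def by (rule ennreal_minus_eq_0)
  then show ?thesis using le[of t] by (rule antisym)
qed

end

locale model = chain_params +
  assumes lam_pos: "lam > 0" and bet_pos: "bet > 0" and eps_pos: "eps > 0"
    and gam_pos: "gam > 0" and r_pos: "r > 0"
begin

lemma rate_nonneg: "rt u t \<ge> 0"
  using lam_pos eps_pos bet_pos r_pos by (simp add: rate_def)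

lemma arr_target_ne: "arr_target gam u \<noteq> u"
  by (cases u) (simp add: arr_target_def)

lemma srv_target_ne: "srv_target gam u \<noteq> u"
  by (cases u) (simp add: srv_target_def)

lemma rate_eq_0_off_targets: "t \<notin> targets gam u \<Longrightarrow> rt u t = 0"
  by (auto simp: rate_def targets_def)

lemma sum_targets_rate:
  fixes \<phi> :: "state \<Rightarrow> real"
  assumes "\<phi> u = 0"
  shows "(\<Sum>t\<in>targets gam u. rt u t * \<phi> t)
       = lam * r * \<phi> (arr_target gam u) + bet * real (snd u) * \<phi> (srv_target gam u)
         + eps * real_of_int \<bar>fst u\<bar> * \<phi> (eps_target u)"
proof -
  let ?a = "arr_target gam u" and ?b = "srv_target gam u" and ?c = "eps_target u"
  have eq: "rt u t * \<phi> t = (if t = ?a then lam * r * \<phi> t else 0)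
      + (if t = ?b then bet * real (snd u) * \<phi> t else 0)
      + (if t = ?c then eps * real_of_int \<bar>fst u\<bar> * \<phi> t else 0)" for t
    using assms by (cases "t = u") (auto simp: rate_def algebra_simps)
  show ?thesis
    unfolding eq sum.distrib by (simp add: sum.delta' targets_def)
qed

lemma qout_eq:
  "q u = lam * r + bet * real (snd u) + (if eps_target u = u then 0 else eps * real_of_int \<bar>fst u\<bar>)"
proof -
  have "q u = (\<Sum>t\<in>targets gam u. rt u t * (if t = u then 0 else 1))"
    unfolding qout_def by (rule sum.cong) (auto simp: rate_def)
  also have "\<dots> = lam * r + bet * real (snd u) + (if eps_target u = u then 0 else eps * real_of_int \<bar>fst u\<bar>)"
    by (subst sum_targets_rate) (auto simp: arr_target_ne srv_target_ne)
  finally show ?thesis .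
qed

lemma qout_ge: "q u \<ge> lam * r"
  using eps_pos bet_pos by (simp add: qout_eq)

lemma qout_le: "q u \<le> lam * r + bet * real (snd u) + eps * real_of_int \<bar>fst u\<bar>"
  using eps_pos by (simp add: qout_eq)

lemma lam_r_pos: "lam * r > 0"
  using lam_pos r_pos by simp

lemma qout_pos: "q u > 0"
  using qout_ge[of u] lam_r_pos by linarith

lemma esum_jump_row: "esum (P u) = 1"
proof -
  have "esum (P u) = (\<Sum>t\<in>targets gam u. P u t)"
    by (rule esum_finite_support) (auto simp: jump_def rate_eq_0_off_targets targets_def)
  also have "\<dots> = ennreal ((\<Sum>t\<in>targets gam u. rt u t) / q u)"
    unfolding jump_def sum_divide_distrib using qout_pos[of u] rate_nonneg
    by (subst sum_ennreal) auto
  also have "\<dots> = 1" using qout_pos[of u] by (simp add: qout_def)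
  finally show ?thesis .
qed

sublocale jump_chain lam bet eps gam r
  by unfold_locales (rule esum_jump_row)

lemma jump_pos: "rt u w > 0 \<Longrightarrow> 0 < P u w"
  using qout_pos[of u] by (simp add: jump_def)

definition drift :: "(state \<Rightarrow> real) \<Rightarrow> state \<Rightarrow> real" where
  "drift V u = lam * r * (V (arr_target gam u) - V u)
     + bet * real (snd u) * (V (srv_target gam u) - V u)
     + eps * real_of_int \<bar>fst u\<bar> * (V (eps_target u) - V u)"

lemma sum_targets_rate_times: "(\<Sum>t\<in>targets gam u. rt u t * V t) = V u * q u + drift V u"
proof -
  have "(\<Sum>t\<in>targets gam u. rt u t * V t)
      = (\<Sum>t\<in>targets gam u. rt u t * (V t - V u)) + V u * (\<Sum>t\<in>targets gam u. rt u t)"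
    by (simp add: sum_distrib_left algebra_simps sum_subtractf)
  then show ?thesis by (subst (asm) sum_targets_rate) (auto simp: drift_def qout_def)
qed

lemma esum_jump_times:
  fixes V :: "state \<Rightarrow> real"
  assumes "\<And>t. V t \<ge> 0"
  shows "esum (\<lambda>t. P u t * ennreal (V t)) = ennreal ((V u * q u + drift V u) / q u)"
proof -
  have "esum (\<lambda>t. P u t * ennreal (V t)) = (\<Sum>t\<in>targets gam u. P u t * ennreal (V t))"
    by (rule esum_finite_support) (auto simp: jump_def rate_eq_0_off_targets targets_def)
  also have "\<dots> = (\<Sum>t\<in>targets gam u. ennreal (rt u t * V t / q u))"
    using qout_pos[of u] rate_nonneg assms by (simp add: jump_def ennreal_mult[symmetric])
  also have "\<dots> = ennreal ((\<Sum>t\<in>targets gam u. rt u t * V t) / q u)"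
    using qout_pos[of u] rate_nonneg assms by (simp add: sum_divide_distrib sum_ennreal)
  finally show ?thesis by (simp add: sum_targets_rate_times)
qed

lemma jump_drift_bound:
  fixes V :: "state \<Rightarrow> real"
  assumes V: "\<And>t. V t \<ge> 0" and dr: "drift V u \<le> - F + b" and F: "F \<ge> 0" and b: "b \<ge> 0"
  shows "esum (\<lambda>t. P u t * ennreal (V t)) + ennreal (F / q u) \<le> ennreal (V u) + ennreal (b / q u)"
proof -
  have q: "q u > 0" by (rule qout_pos)
  have "V u * q u + drift V u \<ge> 0"
    unfolding sum_targets_rate_times[symmetric] using V rate_nonneg by (simp add: sum_nonneg)
  then have nonneg: "(V u * q u + drift V u) / q u \<ge> 0" using q by simp
  have "(V u * q u + drift V u) / q u + F / q u = V u + (drift V u + F) / q u"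
    using q by (simp add: field_simps)
  also have "\<dots> \<le> V u + b / q u"
    using dr q by (simp add: divide_right_mono)
  finally have "(V u * q u + drift V u) / q u + F / q u \<le> V u + b / q u" .
  then show ?thesis
    using nonneg F b V[of u] q
    by (simp add: esum_jump_times[OF V] ennreal_plus[symmetric] del: ennreal_plus)
qed

end

lemma quadratic_max_le:
  fixes \<alpha> K p :: real
  assumes "\<alpha> > 0"
  shows "- \<alpha> * p^2 + K * p \<le> K^2 / (4 * \<alpha>)"
proof -
  have "0 \<le> (2 * \<alpha> * p - K)^2" by simp
  then have "4 * \<alpha> * (K * p - \<alpha> * p^2) \<le> K^2"
    by (simp add: power2_eq_square algebra_simps)
  then show ?thesis
    using assms by (simp add: le_divide_eq mult.commute)
qed

lemma neg_quadratic_absorbs_linear: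
  fixes a k e c z :: real
  assumes "a > 0" "c \<ge> 1" "k \<ge> 0" "e \<ge> 0"
  shows "- a * z^2 + k * \<bar>z\<bar> \<le> - (e * c * \<bar>z\<bar>) + ((k + e) * c)^2 / (4 * a)"
proof -
  have "k * \<bar>z\<bar> \<le> k * c * \<bar>z\<bar>"
    using assms mult_left_mono[of 1 c k] by (simp add: mult_right_mono)
  moreover have "- a * \<bar>z\<bar>^2 + ((k + e) * c) * \<bar>z\<bar> \<le> ((k + e) * c)^2 / (4 * a)"
    by (rule quadratic_max_le) (use assms in simp)
  ultimately show ?thesis by (simp add: algebra_simps)
qed

text \<open>The service term of the drift when fewer than gam customers are present
  (min gam X = X < gam) is bounded independently of X.\<close>
lemma service_correction_le:
  fixes g x y c bet :: real
  assumes "x \<ge> 0" "g \<ge> 0" "c \<ge> 0" "bet \<ge> 0"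
  shows "bet * x * (g - min g x) * (g * y + 2 * (x - c) - min g x) \<le> bet * g^2 * (g * \<bar>y\<bar> + g)"
proof (cases "g \<le> x")
  case True
  then show ?thesis using assms by simp
next
  case False
  then have m: "min g x = x" by simp
  have a0: "bet * x * (g - x) \<ge> 0" using assms False by simp
  have a1: "bet * x * (g - x) \<le> bet * g^2"
  proof -
    have "x * (g - x) \<le> g * g" using assms False by (intro mult_mono) auto
    then show ?thesis using assms by (simp add: power2_eq_square mult.assoc mult_left_mono)
  qed
  have "g * y \<le> g * \<bar>y\<bar>" using assms by (simp add: mult_left_mono)
  then have z: "g * y + 2 * (x - c) - x \<le> g * \<bar>y\<bar> + g"
    using assms False by (smt (verit))
  have b0: "bet * g^2 * (g * \<bar>y\<bar> + g) \<ge> 0" using assms by simp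
  show ?thesis
  proof (cases "g * y + 2 * (x - c) - x \<le> 0")
    case True
    then have "bet * x * (g - x) * (g * y + 2 * (x - c) - x) \<le> 0"
      using a0 by (simp add: mult_nonneg_nonpos)
    then show ?thesis using m b0 by simp
  next
    case False
    have "bet * x * (g - x) * (g * y + 2 * (x - c) - x) \<le> bet * g^2 * (g * \<bar>y\<bar> + g)"
      by (rule mult_mono[OF a1 z]) (use b0 False assms in auto)
    then show ?thesis using m by simp
  qed
qed

text \<open>A is chosen so that bet (2 A - gam^2) = 2 eps: then the cross terms Y (X - c) of the
  arrival and the eps-transitions cancel in the drift of the Lyapunov function.\<close>
definition lyap_coeff :: "real \<Rightarrow> real \<Rightarrow> nat \<Rightarrow> real" where
  "lyap_coeff bet eps gam = real gam ^ 2 / 2 + eps / bet"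

definition drift_const :: "real \<Rightarrow> real \<Rightarrow> nat \<Rightarrow> real" where
  "drift_const bet eps gam =
     (2 * eps + bet * real gam ^ 3)^2 / (4 * real gam * eps)
     + (lyap_coeff bet eps gam * bet + eps)^2 / (4 * real gam * bet)
     + 3 * lyap_coeff bet eps gam * bet + bet * real gam ^ 3 + eps"

lemma lyap_coeff_pos: "bet > 0 \<Longrightarrow> eps > 0 \<Longrightarrow> lyap_coeff bet eps gam > 0"
  unfolding lyap_coeff_def by (intro add_nonneg_pos) auto

lemma drift_const_ge:
  assumes "bet > 0" "eps > 0"
  shows "drift_const bet eps gam \<ge> lyap_coeff bet eps gam * bet + eps"
  using assms lyap_coeff_pos[OF assms, of gam] unfolding drift_const_def
  by (simp add: add_nonneg_nonneg)

lemma drift_poly_le: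
  fixes bet eps c y v :: real and gam :: nat
  defines "g \<equiv> real gam" and "A \<equiv> lyap_coeff bet eps gam"
  assumes g: "gam > 0" and bet: "bet > 0" and eps: "eps > 0" and c: "c \<ge> 1"
    and corr: "corr \<le> bet * g^2 * (g * \<bar>y\<bar> + g)"
  shows "- g * bet * v^2 + A * bet * (2 * c + v) - g * eps * y^2 + eps * \<bar>y\<bar> + corr
          \<le> - (eps * c * (\<bar>y\<bar> + \<bar>v\<bar>)) + drift_const bet eps gam * c^2"
proof -
  obtain K1 K2 where K1: "K1 = eps + bet * g^3 + eps" and K2: "K2 = A * bet + eps" by blast
  have g1: "g \<ge> 1" using g by (simp add: g_def)
  have A0: "A > 0" unfolding A_def by (rule lyap_coeff_pos[OF bet eps])
  have y_part: "- (g * eps) * y^2 + (eps + bet * g^3) * \<bar>y\<bar>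
      \<le> - (eps * c * \<bar>y\<bar>) + (K1 * c)^2 / (4 * (g * eps))"
    unfolding K1 by (rule neg_quadratic_absorbs_linear) (use g1 bet eps c in auto)
  have v_part: "- (g * bet) * v^2 + (A * bet) * \<bar>v\<bar>
      \<le> - (eps * c * \<bar>v\<bar>) + (K2 * c)^2 / (4 * (g * bet))"
    unfolding K2 by (rule neg_quadratic_absorbs_linear) (use g1 bet eps c A0 in auto)
  have "A * bet * v \<le> A * bet * \<bar>v\<bar>" using A0 bet by (simp add: mult_left_mono)
  moreover have "2 * A * bet * c \<le> 2 * A * bet * c^2" "bet * g^3 * 1 \<le> bet * g^3 * c^2"
  proof -
    have "c \<le> c^2" using c by (simp add: power2_eq_square)
    moreover have "1 \<le> c^2" using c by (simp add: one_le_power)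
    ultimately show "2 * A * bet * c \<le> 2 * A * bet * c^2" "bet * g^3 * 1 \<le> bet * g^3 * c^2"
      using A0 bet g1 by (simp_all add: mult_left_mono)
  qed
  moreover have "drift_const bet eps gam * c^2
      = (K1 * c)^2 / (4 * (g * eps)) + (K2 * c)^2 / (4 * (g * bet))
        + (2 * A * bet + bet * g^3) * c^2 + (A * bet + eps) * c^2"
  proof -
    have "K1 = 2 * eps + bet * g^3" using K1 by simp
    then have "drift_const bet eps gam
        = K1^2 / (4 * (g * eps)) + K2^2 / (4 * (g * bet)) + 3 * A * bet + bet * g^3 + eps"
      by (simp add: drift_const_def K2 A_def g_def mult.assoc)
    then show ?thesis by (simp add: power_mult_distrib field_simps)
  qed
  moreover have "(A * bet + eps) * c^2 \<ge> 0" using A0 bet eps by simp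
  ultimately show ?thesis
    using y_part v_part corr by (simp add: algebra_simps power2_eq_square power3_eq_cube)
qed

lemma drift_identity:
  fixes bet A g eps x v c y m ay :: real
  assumes "bet * (2 * A) = bet * g^2 + 2 * eps" and "x = v + c"
  shows "bet * c * (A - (2 * A - g^2) * y + g * v)
        + bet * x * ((2 * A - g * m) * y + (g - 2 * m) * v + A - g * m + m^2)
        + (- g * eps * y^2 - 2 * eps * y * v + eps * ay)
      = - g * bet * v^2 + A * bet * (2 * c + v) - g * eps * y^2 + eps * ay
        + bet * x * (g - m) * (g * y + 2 * v - m)"
proof -
  have eps: "eps = bet * A - bet * g^2 / 2" using assms(1) by simp
  show ?thesis unfolding assms(2) eps by (simp add: algebra_simps power2_eq_square)
qed

context model
begin

text \<open>xc = lam r / bet is the equilibrium level of X; the scaled state is r^-1 (Y, X - xc).\<close>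
definition "xc = lam * r / bet"

abbreviation "A \<equiv> lyap_coeff bet eps gam"

definition lyap :: "state \<Rightarrow> real" where
  "lyap u = A * (real_of_int (fst u))^2 + real gam * real_of_int (fst u) * (real (snd u) - xc)
     + (real (snd u) - xc)^2"

definition decay :: "state \<Rightarrow> real" where
  "decay u = eps * xc * (\<bar>real_of_int (fst u)\<bar> + \<bar>real (snd u) - xc\<bar>)"

lemma bet_lyap_coeff: "bet * (2 * A) = bet * real gam^2 + 2 * eps"
  using bet_pos by (simp add: lyap_coeff_def field_simps)

lemma lam_r_eq: "lam * r = bet * xc"
  using bet_pos by (simp add: xc_def)

lemma xc_nonneg: "xc \<ge> 0"
  using lam_pos r_pos bet_pos by (simp add: xc_def)

lemma decay_nonneg: "decay u \<ge> 0"
  using eps_pos xc_nonneg by (simp add: decay_def)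

lemma lyap_nonneg: "lyap u \<ge> 0"
proof -
  define y where "y = real_of_int (fst u)"
  define v where "v = real (snd u) - xc"
  define g where "g = real gam"
  have "lyap u = (v + g * y / 2)^2 + (A - g^2/4) * y^2"
    by (simp add: lyap_def y_def v_def g_def power2_eq_square algebra_simps)
  moreover have "A - g^2/4 \<ge> 0" using bet_pos eps_pos by (simp add: lyap_coeff_def g_def)
  ultimately show ?thesis by simp
qed

lemma lyap_arr_diff: "lyap (arr_target gam u) - lyap u
   = A - (2 * A - real gam^2) * real_of_int (fst u) + real gam * (real (snd u) - xc)"
  by (simp add: lyap_def arr_target_def power2_eq_square algebra_simps)

lemma lyap_srv_diff: "lyap (srv_target gam u) - lyap u
   = (2 * A - real gam * min (real gam) (real (snd u))) * real_of_int (fst u)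
     + (real gam - 2 * min (real gam) (real (snd u))) * (real (snd u) - xc)
     + A - real gam * min (real gam) (real (snd u)) + (min (real gam) (real (snd u)))^2"
proof -
  have "real (snd u - min gam (snd u)) = real (snd u) - min (real gam) (real (snd u))"
    by (simp add: of_nat_diff)
  then show ?thesis
    by (simp add: lyap_def srv_target_def power2_eq_square algebra_simps)
qed

lemma eps_drift_term:
  assumes "\<not> (snd u = 0 \<and> fst u \<ge> 0)"
  shows "eps * real_of_int \<bar>fst u\<bar> * (lyap (eps_target u) - lyap u)
     = - real gam * eps * (real_of_int (fst u))^2
       - 2 * eps * real_of_int (fst u) * (real (snd u) - xc) + eps * \<bar>real_of_int (fst u)\<bar>"
proof -
  obtain Y X where u: "u = (Y, X)" by (cases u)
  consider "Y > 0" | "Y = 0" | "Y < 0" by linarith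
  then show ?thesis
  proof cases
    case 1
    then have "X \<ge> 1" using assms u by auto
    then have "eps_target u = (Y, X - 1)" using 1 u by (simp add: eps_target_def)
    then show ?thesis using 1 \<open>X \<ge> 1\<close> u
      by (simp add: lyap_def of_nat_diff power2_eq_square algebra_simps)
  next
    case 2 then show ?thesis using u by simp
  next
    case 3
    then have "eps_target u = (Y, X + 1)" using u by (cases "X \<ge> 1") (auto simp: eps_target_def)
    then show ?thesis using 3 u by (simp add: lyap_def power2_eq_square algebra_simps)
  qed
qed

text \<open>An empty buffer with Y \<ge> 0 is the one place where the eps-term does not contribute,
  so this case is bounded separately.\<close>
lemma drift_lyap_idle:
  assumes xc: "xc \<ge> 1" and idle: "snd u = 0" "fst u \<ge> 0"
  shows "drift lyap u \<le> - decay u + drift_const bet eps gam * xc^2"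
proof -
  define y where "y = real_of_int (fst u)"
  have y0: "y \<ge> 0" using idle by (simp add: y_def)
  have "eps_target u = u" using idle by (simp add: eps_target_def)
  then have "drift lyap u = bet * xc * (A - (2 * A - real gam^2) * y - real gam * xc)"
    using idle by (simp add: drift_def lyap_arr_diff lam_r_eq y_def srv_target_def)
  also have "\<dots> = A * bet * xc - (bet * (2 * A - real gam^2)) * xc * y - real gam * bet * xc^2"
    by (simp add: algebra_simps power2_eq_square)
  also have "\<dots> = A * bet * xc - 2 * eps * xc * y - real gam * bet * xc^2"
    using bet_lyap_coeff by (simp add: algebra_simps)
  also have "\<dots> \<le> - (eps * xc * (y + xc)) + drift_const bet eps gam * xc^2"
  proof -
    have "A * bet * xc \<le> A * bet * xc^2"
      using xc lyap_coeff_pos[OF bet_pos eps_pos] bet_pos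
      by (simp add: mult_left_mono power2_eq_square)
    moreover have "(A * bet + eps) * xc^2 \<le> drift_const bet eps gam * xc^2"
      using drift_const_ge[OF bet_pos eps_pos] by (simp add: mult_right_mono)
    moreover have "eps * xc * y \<ge> 0" "real gam * bet * xc^2 \<ge> 0"
      using eps_pos bet_pos xc y0 by simp_all
    ultimately show ?thesis by (simp add: algebra_simps power2_eq_square)
  qed
  also have "\<dots> = - decay u + drift_const bet eps gam * xc^2"
    using idle xc_nonneg by (simp add: decay_def y_def)
  finally show ?thesis .
qed

lemma drift_lyap_busy:
  assumes xc: "xc \<ge> 1" and busy: "\<not> (snd u = 0 \<and> fst u \<ge> 0)"
  shows "drift lyap u \<le> - decay u + drift_const bet eps gam * xc^2"
proof -
  define y where "y = real_of_int (fst u)"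
  define x where "x = real (snd u)"
  define v where "v = x - xc"
  define g where "g = real gam"
  define m where "m = min g x"
  have "drift lyap u = bet * xc * (A - (2 * A - g^2) * y + g * v)
      + bet * x * ((2 * A - g * m) * y + (g - 2 * m) * v + A - g * m + m^2)
      + (- g * eps * y^2 - 2 * eps * y * v + eps * \<bar>y\<bar>)"
    unfolding drift_def lyap_arr_diff lyap_srv_diff eps_drift_term[OF busy] lam_r_eq
    by (simp add: y_def x_def v_def g_def m_def)
  also have "\<dots> = - g * bet * v^2 + A * bet * (2 * xc + v) - g * eps * y^2 + eps * \<bar>y\<bar>
      + bet * x * (g - m) * (g * y + 2 * v - m)"
    by (rule drift_identity) (use bet_lyap_coeff in \<open>simp_all add: g_def v_def\<close>)
  also have "\<dots> \<le> - (eps * xc * (\<bar>y\<bar> + \<bar>v\<bar>)) + drift_const bet eps gam * xc^2"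
    unfolding g_def
  proof (rule drift_poly_le[OF gam_pos bet_pos eps_pos xc])
    show "bet * x * (real gam - m) * (real gam * y + 2 * v - m)
        \<le> bet * (real gam)^2 * (real gam * \<bar>y\<bar> + real gam)"
      unfolding m_def v_def g_def
      by (rule service_correction_le) (use bet_pos xc_nonneg in \<open>auto simp: x_def\<close>)
  qed
  also have "\<dots> = - decay u + drift_const bet eps gam * xc^2"
    by (simp add: decay_def y_def v_def x_def)
  finally show ?thesis .
qed

lemma drift_lyap_le:
  "xc \<ge> 1 \<Longrightarrow> drift lyap u \<le> - decay u + drift_const bet eps gam * xc^2"
  using drift_lyap_idle drift_lyap_busy by blast

lemma rate_ge_components:
  assumes "t \<noteq> u"
  shows "rt u t \<ge> (if t = arr_target gam u then lam * r else 0)"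
    and "rt u t \<ge> (if t = srv_target gam u then bet * real (snd u) else 0)"
    and "rt u t \<ge> (if t = eps_target u then eps * real_of_int \<bar>fst u\<bar> else 0)"
  using assms lam_pos bet_pos eps_pos r_pos by (auto simp: rate_def)

lemma jump_pos_arr: "E u (arr_target gam u)"
  using rate_ge_components(1)[OF arr_target_ne, of u] lam_r_pos by (intro jump_pos) simp

lemma jump_pos_srv:
  assumes "snd u \<ge> 1"
  shows "E u (srv_target gam u)"
proof (rule jump_pos)
  have "bet * real (snd u) \<le> rt u (srv_target gam u)"
    using rate_ge_components(2)[OF srv_target_ne, of u] by simp
  moreover have "bet * real (snd u) > 0" using bet_pos assms by simp
  ultimately show "rt u (srv_target gam u) > 0" by linarith
qed

lemma jump_pos_eps:
  assumes "eps_target u \<noteq> u" "fst u \<noteq> 0"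
  shows "E u (eps_target u)"
proof (rule jump_pos)
  have "eps * real_of_int \<bar>fst u\<bar> \<le> rt u (eps_target u)"
    using rate_ge_components(3)[OF assms(1)] by simp
  moreover have "eps * real_of_int \<bar>fst u\<bar> > 0" using eps_pos assms(2) by simp
  ultimately show "rt u (eps_target u) > 0" by linarith
qed

lemma reaches_arr: "reaches (Y, X) (Y - 1, X + gam)"
  by (rule r_into_rtranclp) (use jump_pos_arr[of "(Y,X)"] in \<open>simp add: arr_target_def\<close>)

lemma reaches_srv: "X \<ge> 1 \<Longrightarrow> reaches (Y, X) (Y + 1, X - min gam X)"
  by (rule r_into_rtranclp) (use jump_pos_srv[of "(Y,X)"] in \<open>simp add: srv_target_def\<close>)

lemma reaches_up:
  assumes "Y < 0"
  shows "reaches (Y, X) (Y, X + 1)"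
proof -
  have "eps_target (Y, X) = (Y, X + 1)" using assms by (cases "X \<ge> 1") (auto simp: eps_target_def)
  then show ?thesis using jump_pos_eps[of "(Y, X)"] assms by auto
qed

lemma reaches_down:
  assumes "Y > 0" "X \<ge> 1"
  shows "reaches (Y, X) (Y, X - 1)"
proof -
  have "eps_target (Y, X) = (Y, X - 1)" using assms by (simp add: eps_target_def)
  then show ?thesis using jump_pos_eps[of "(Y, X)"] assms by auto
qed

lemma reaches_up_iter: "Y < 0 \<Longrightarrow> reaches (Y, X) (Y, X + m)"
proof (induction m)
  case 0 then show ?case by simp
next
  case (Suc m)
  then show ?case using reaches_up[of Y "X + m"] by (simp add: rtranclp_trans)
qed

lemma reaches_down_iter: "Y > 0 \<Longrightarrow> m \<le> X \<Longrightarrow> reaches (Y, X) (Y, X - m)"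
proof (induction m)
  case 0 then show ?case by simp
next
  case (Suc m)
  then have "reaches (Y, X) (Y, X - m)" by simp
  moreover have "reaches (Y, X - m) (Y, X - m - 1)" using reaches_down[of Y "X - m"] Suc.prems by simp
  ultimately show ?case by (simp add: rtranclp_trans)
qed

lemma reaches_axis_inc: "reaches (0, j) (0, j + m)"
proof -
  have "reaches (0, j) (-1, j + gam)" using reaches_arr[of 0 j] by simp
  also have "reaches (-1, j + gam) (-1, j + gam + m)" by (rule reaches_up_iter) simp
  also have "reaches (-1, j + gam + m) (0, j + m)"
    using reaches_srv[of "j + gam + m" "-1"] gam_pos by simp
  finally show ?thesis .
qed

lemma reaches_axis_dec: "j \<ge> gam \<Longrightarrow> m \<le> j - gam \<Longrightarrow> reaches (0, j) (0, j - m)"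
proof -
  assume j: "j \<ge> gam" and m: "m \<le> j - gam"
  have "reaches (0, j) (1, j - gam)" using reaches_srv[of j 0] j gam_pos by (simp add: min_def)
  also have "reaches (1, j - gam) (1, j - gam - m)" by (rule reaches_down_iter) (use m in auto)
  also have "reaches (1, j - gam - m) (0, j - m)"
    using reaches_arr[of 1 "j - gam - m"] j m by simp
  finally show ?thesis .
qed

lemma reaches_axis: "j \<ge> gam \<Longrightarrow> k \<ge> gam \<Longrightarrow> reaches (0, j) (0, k)"
proof (cases "j \<le> k")
  case True
  then show ?thesis using reaches_axis_inc[of j "k - j"] by simp
next
  case False
  assume "j \<ge> gam" "k \<ge> gam"
  then show ?thesis using reaches_axis_dec[of j "j - k"] False by simp
qed

lemma reaches_axis_from_pos: "reaches (int n, X) (0, X + gam * n)"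
proof (induction n arbitrary: X)
  case 0 then show ?case by simp
next
  case (Suc n)
  have "reaches (int (Suc n), X) (int n, X + gam)" using reaches_arr[of "int (Suc n)" X] by simp
  also have "reaches (int n, X + gam) (0, X + gam + gam * n)" by (rule Suc.IH)
  finally show ?case by (simp add: algebra_simps)
qed

lemma reaches_axis_from_neg: "\<exists>j\<ge>gam. reaches (- int n - 1, X) (0, j)"
proof (induction n arbitrary: X)
  case 0
  have "reaches (-1, X) (-1, X + 2 * gam)" by (rule reaches_up_iter) simp
  also have "reaches (-1, X + 2 * gam) (0, X + gam)"
    using reaches_srv[of "X + 2 * gam" "-1"] gam_pos by (simp add: min_def add.commute)
  finally have "reaches (-1, X) (0, X + gam)" .
  then have "reaches (- int 0 - 1, X) (0, X + gam)" by simp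
  then show ?case by (intro exI[of _ "X + gam"]) simp
next
  case (Suc n)
  let ?Y = "- int (Suc n) - 1"
  have "reaches (?Y, X) (?Y, X + 2 * gam)" by (rule reaches_up_iter) simp
  also have "reaches (?Y, X + 2 * gam) (- int n - 1, X + gam)"
  proof -
    have "reaches (?Y, X + 2 * gam) (?Y + 1, X + 2 * gam - min gam (X + 2 * gam))"
      by (rule reaches_srv) (use gam_pos in simp)
    moreover have "?Y + 1 = - int n - 1" "X + 2 * gam - min gam (X + 2 * gam) = X + gam" by auto
    ultimately show ?thesis by metis
  qed
  finally show ?case using Suc.IH[of "X + gam"] by (auto intro: rtranclp_trans)
qed

lemma reaches_axis_point:
  assumes k: "k \<ge> gam"
  shows "reaches u (0, k)"
proof -
  obtain Y X where u: "u = (Y, X)" by (cases u)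
  consider "Y > 0" | "Y < 0" | "Y = 0 \<and> X \<ge> gam" | "Y = 0 \<and> X < gam" by linarith
  then show ?thesis
  proof cases
    case 1
    then obtain n where n: "Y = int n" "n > 0" by (metis zero_less_imp_eq_int)
    have gn0: "gam \<le> gam * n" using n by simp
    have gn: "gam \<le> X + gam * n" using gn0 by linarith
    have "reaches (Y, X) (0, X + gam * n)" using reaches_axis_from_pos n by simp
    also have "reaches (0, X + gam * n) (0, k)" by (rule reaches_axis) (use n k gn in auto)
    finally show ?thesis using u by simp
  next
    case 2
    define n where "n = nat (- Y - 1)"
    have Yn: "Y = - int n - 1" using 2 by (simp add: n_def)
    obtain j where j: "j \<ge> gam" "reaches (Y, X) (0, j)" using reaches_axis_from_neg[of n X] Yn by auto
    show ?thesis using j reaches_axis[OF j(1) k] u by (auto intro: rtranclp_trans)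
  next
    case 3 then show ?thesis using reaches_axis[of X k] k u by simp
  next
    case 4
    have "reaches (0, X) (-1, X + gam)" using reaches_arr[of 0 X] by simp
    moreover obtain j where j: "j \<ge> gam" "reaches (-1, X + gam) (0, j)"
      using reaches_axis_from_neg[of 0 "X + gam"] by auto
    ultimately show ?thesis using reaches_axis[OF j(1) k] u 4 by (auto intro: rtranclp_trans)
  qed
qed

end

lemma drift_const_nonneg:
  assumes "bet > 0" "eps > 0"
  shows "drift_const bet eps gam \<ge> 0"
proof -
  have "lyap_coeff bet eps gam * bet > 0" using lyap_coeff_pos[OF assms] assms by simp
  then show ?thesis using drift_const_ge[OF assms, of gam] assms by linarith
qed

definition start_const :: "real \<Rightarrow> nat \<Rightarrow> real" where
  "start_const bet gam = (real gam + 1)^2 * bet * (3 + real gam)"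

lemma start_const_nonneg: "bet \<ge> 0 \<Longrightarrow> start_const bet gam \<ge> 0"
  by (simp add: start_const_def)

locale large_scale = model +
  assumes xc_ge_1: "xc \<ge> 1" and eps_xc: "eps * xc \<ge> 2 * (bet + eps)"
begin

text \<open>The base state s0 lies on the communicating axis with X - xc \<in> [gam, gam + 1), so that
  V s0 = O(1) and q s0 = O(xc).\<close>
definition "s0 = (0::int, nat \<lceil>xc\<rceil> + gam)"
definition "slack = drift_const bet eps gam * xc^2"

abbreviation "V \<equiv> \<lambda>u. ennreal (lyap u)"

lemma reaches_s0: "reaches u s0"
  unfolding s0_def by (rule reaches_axis_point) simp

lemma visits_s0_finite: "visits s0 u < \<infinity>"
  by (rule visits_finite_if_reaches[OF reaches_s0])

lemma slack_nonneg: "slack \<ge> 0"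
  using drift_const_nonneg[OF bet_pos eps_pos] by (simp add: slack_def)

lemma drift_lyap_le_slack: "drift lyap u \<le> - decay u + slack"
  using drift_lyap_le[OF xc_ge_1] by (simp add: slack_def)

definition "radius = (slack + 2 * bet * xc) / (bet + eps)"
definition "small_set = {u::state. \<bar>real_of_int (fst u)\<bar> + \<bar>real (snd u) - xc\<bar> < radius}"

lemma finite_small_set: "finite small_set"
proof -
  have "small_set \<subseteq> {- \<lceil>radius\<rceil>..\<lceil>radius\<rceil>} \<times> {0..nat \<lceil>xc + radius\<rceil>}"
  proof
    fix u assume "u \<in> small_set"
    then have h: "\<bar>real_of_int (fst u)\<bar> + \<bar>real (snd u) - xc\<bar> < radius"
      by (simp add: small_set_def)
    have "real_of_int (fst u) \<le> radius" "real_of_int (- fst u) \<le> radius" using h by linarith+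
    then have "fst u \<le> \<lceil>radius\<rceil>" "- fst u \<le> \<lceil>radius\<rceil>" by (simp_all only: le_ceiling_iff)
    then have "fst u \<in> {- \<lceil>radius\<rceil>..\<lceil>radius\<rceil>}" by simp
    moreover have "int (snd u) \<le> \<lceil>xc + radius\<rceil>" using h by (simp add: le_ceiling_iff)
    ultimately show "u \<in> {- \<lceil>radius\<rceil>..\<lceil>radius\<rceil>} \<times> {0..nat \<lceil>xc + radius\<rceil>}"
      by (cases u) auto
  qed
  then show ?thesis by (rule finite_subset) auto
qed

text \<open>Off the small set the decay eps xc (|Y| + |X - xc|) dominates both the slack and the
  jump rate q, which grows only linearly in |Y| + |X - xc|.\<close>
lemma drift_lyap_le_off_small_set:
  assumes "u \<notin> small_set"
  shows "drift lyap u \<le> - q u"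
proof -
  define p where "p = \<bar>real_of_int (fst u)\<bar>"
  define w where "w = \<bar>real (snd u) - xc\<bar>"
  have pw: "p \<ge> 0" "w \<ge> 0" by (simp_all add: p_def w_def)
  have "p + w \<ge> radius" using assms by (simp add: small_set_def p_def w_def)
  then have "(bet + eps) * (p + w) \<ge> slack + 2 * bet * xc"
    using bet_pos eps_pos by (simp add: radius_def divide_le_eq mult.commute)
  moreover have "q u \<le> 2 * bet * xc + bet * w + eps * p"
  proof -
    have "bet * real (snd u) \<le> bet * (w + xc)" using bet_pos by (simp add: w_def)
    then show ?thesis using qout_le[of u] lam_r_eq by (simp add: p_def algebra_simps)
  qed
  moreover have "eps * xc * (p + w) \<ge> 2 * (bet + eps) * (p + w)"
    using eps_xc pw by (intro mult_right_mono) auto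
  moreover have "decay u = eps * xc * (p + w)" by (simp add: decay_def p_def w_def)
  moreover have "bet * p \<ge> 0" "eps * w \<ge> 0" using pw bet_pos eps_pos by simp_all
  ultimately have "decay u \<ge> slack + q u"
    by (simp add: algebra_simps)
  then show ?thesis using drift_lyap_le_slack[of u] by simp
qed

definition "small_cost = ennreal (1 + slack / (lam * r))"

lemma jump_drift_small_set:
  "esum (\<lambda>t. P u t * V t) + 1 \<le> V u + (if u \<in> small_set then small_cost else 0)"
proof (cases "u \<in> small_set")
  case False
  have "esum (\<lambda>t. P u t * V t) + ennreal (q u / q u) \<le> V u + ennreal (0 / q u)"
    by (rule jump_drift_bound[OF lyap_nonneg])
      (use drift_lyap_le_off_small_set[OF False] qout_pos[of u] in auto)
  then show ?thesis using qout_pos[of u] False by simp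
next
  case True
  have "esum (\<lambda>t. P u t * V t) + ennreal (decay u / q u) \<le> V u + ennreal (slack / q u)"
    by (rule jump_drift_bound[OF lyap_nonneg drift_lyap_le_slack decay_nonneg slack_nonneg])
  then have "esum (\<lambda>t. P u t * V t) \<le> V u + ennreal (slack / q u)"
    by (rule order_trans[rotated]) simp
  also have "\<dots> \<le> V u + ennreal (slack / (lam * r))"
    using qout_ge[of u] lam_r_pos slack_nonneg
    by (intro add_left_mono ennreal_leI divide_left_mono) auto
  finally have "esum (\<lambda>t. P u t * V t) + 1 \<le> V u + (ennreal (slack / (lam * r)) + 1)"
    by (simp add: add.assoc add_right_mono)
  also have "ennreal (slack / (lam * r)) + 1 = small_cost"
    using slack_nonneg lam_r_pos by (simp add: small_cost_def ennreal_plus add.commute)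
  finally show ?thesis using True by simp
qed

text \<open>Foster's criterion, via the comparison theorem with g = 1.\<close>
lemma esum_visits_s0_finite: "esum (visits s0) < \<infinity>"
proof -
  have "esum (\<lambda>u. visits s0 u * 1)
      \<le> V s0 + esum (\<lambda>u. visits s0 u * (if u \<in> small_set then small_cost else 0))"
    by (rule visits_drift_bound) (rule jump_drift_small_set)
  also have "esum (\<lambda>u. visits s0 u * (if u \<in> small_set then small_cost else 0))
      = (\<Sum>u\<in>small_set. visits s0 u * small_cost)"
    by (subst esum_finite_support[OF finite_small_set]) auto
  also have "\<dots> < \<infinity>"
    using visits_s0_finite finite_small_set by (simp add: small_cost_def ennreal_mult_less_top)
  finally show ?thesis by simp
qed

lemma return_prob_s0: "return_prob lam bet eps gam r s0 = 1"
  by (rule return_prob_eq_1_if_finite_visits[OF esum_visits_s0_finite])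

lemma visits_s0_invariant: "esum (\<lambda>u. visits s0 u * P u t) = visits s0 t"
  using esum_visits_jump[of s0 t] return_prob_s0 visits_self[of s0] by simp

lemma mean_return_time_s0_finite: "mean_return_time lam bet eps gam r s0 < \<infinity>"
proof -
  have "mean_return_time lam bet eps gam r s0 \<le> esum (\<lambda>u. visits s0 u * ennreal (1 / (lam * r)))"
    unfolding mean_return_time_eq
    by (intro esum_mono mult_left_mono ennreal_leI)
      (use qout_ge qout_pos lam_r_pos in \<open>auto intro!: divide_left_mono mult_pos_pos\<close>)
  also have "\<dots> = esum (visits s0) * ennreal (1 / (lam * r))"
    by (simp add: esum_cmult_right)
  also have "\<dots> < \<infinity>" using esum_visits_s0_finite by (simp add: ennreal_mult_less_top)
  finally show ?thesis .
qed

definition "cycle_len = enn2real (mean_return_time lam bet eps gam r s0)"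

lemma cycle_len:
  "mean_return_time lam bet eps gam r s0 = ennreal cycle_len" "cycle_len \<ge> 1 / q s0" "cycle_len > 0"
proof -
  show eq: "mean_return_time lam bet eps gam r s0 = ennreal cycle_len"
    using mean_return_time_s0_finite by (simp add: cycle_len_def less_top ennreal_enn2real_if)
  have "ennreal (1 / q s0) \<le> mean_return_time lam bet eps gam r s0"
    using esum_ge_term[of "\<lambda>u. visits s0 u * ennreal (1 / q u)" s0]
    by (simp add: mean_return_time_eq visits_self)
  then show "cycle_len \<ge> 1 / q s0" unfolding eq by (simp add: cycle_len_def ennreal_le_iff)
  then show "cycle_len > 0" using qout_pos[of s0] by (meson less_le_trans zero_less_divide_1_iff)
qed

text \<open>The stationary law: occupation measure of an excursion from s0, weighted by the
  mean holding times 1/q and normalised by the mean cycle length.\<close>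
definition "stat_weight u = enn2real (visits s0 u) / (q u * cycle_len)"

lemma ennreal_visits_s0: "visits s0 u = ennreal (enn2real (visits s0 u))"
  using visits_s0_finite[of u] by (simp add: less_top ennreal_enn2real_if)

lemma stat_weight_nonneg: "stat_weight u \<ge> 0"
  using cycle_len(3) qout_pos[of u] by (simp add: stat_weight_def)

lemma ennreal_stat_weight: "ennreal (stat_weight u) = visits s0 u * ennreal (1 / q u) * ennreal (1 / cycle_len)"
  using qout_pos[of u] cycle_len(3)
  by (subst ennreal_visits_s0) (simp add: stat_weight_def ennreal_mult[symmetric] del: ennreal_mult)

lemma esum_stat_weight: "esum (\<lambda>u. ennreal (stat_weight u)) = 1"
proof -
  have "esum (\<lambda>u. ennreal (stat_weight u)) = mean_return_time lam bet eps gam r s0 * ennreal (1 / cycle_len)"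
    by (simp add: ennreal_stat_weight mean_return_time_eq esum_cmult_right)
  also have "\<dots> = 1" using cycle_len by (simp add: ennreal_mult[symmetric] del: ennreal_mult)
  finally show ?thesis .
qed

definition "pi0 = embed_pmf stat_weight"

lemma pmf_pi0: "pmf pi0 u = stat_weight u"
  unfolding pi0_def
  by (rule pmf_embed_pmf) (use stat_weight_nonneg esum_stat_weight in \<open>auto simp: esum_def\<close>)

lemma ennreal_pmf_times_rate:
  "ennreal (pmf \<pi> u * rt u t) = ennreal (pmf \<pi> u * q u) * P u t"
proof -
  have "pmf \<pi> u * rt u t = (pmf \<pi> u * q u) * (rt u t / q u)" using qout_pos[of u] by simp
  then show ?thesis
    using qout_pos[of u] rate_nonneg[of u t]
    by (simp add: jump_def ennreal_mult[symmetric] del: ennreal_mult)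
qed

lemma stationary_invariant:
  assumes "stationary lam bet eps gam r \<pi>"
  shows "esum (\<lambda>u. ennreal (pmf \<pi> u * q u) * P u t) = ennreal (pmf \<pi> t * q t)"
proof -
  have "((\<lambda>u. pmf \<pi> u * rt u t) has_sum (pmf \<pi> t * q t)) UNIV"
    using assms unfolding stationary_def by blast
  then have "esum (\<lambda>u. ennreal (pmf \<pi> u * rt u t)) = ennreal (pmf \<pi> t * q t)"
    by (rule esum_ennreal_eq_if_has_sum) (use rate_nonneg infinite_UNIV_state in auto)
  then show ?thesis by (simp add: ennreal_pmf_times_rate)
qed

lemma ennreal_pmf_pi0_qout: "ennreal (pmf pi0 u * q u) = visits s0 u * ennreal (1 / cycle_len)"
proof -
  have "pmf pi0 u * q u = enn2real (visits s0 u) * (1 / cycle_len)"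
    using qout_pos[of u] by (simp add: pmf_pi0 stat_weight_def)
  then show ?thesis
    using cycle_len(3) by (subst ennreal_visits_s0) (simp add: ennreal_mult[symmetric] del: ennreal_mult)
qed

lemma stationary_pi0: "stationary lam bet eps gam r pi0"
  unfolding stationary_def
proof
  fix t
  have "ennreal (pmf pi0 u * rt u t) = visits s0 u * P u t * ennreal (1 / cycle_len)" for u
    unfolding ennreal_pmf_times_rate ennreal_pmf_pi0_qout by (simp only: mult_ac)
  then have "esum (\<lambda>u. ennreal (pmf pi0 u * rt u t)) = visits s0 t * ennreal (1 / cycle_len)"
    by (simp add: esum_cmult_right visits_s0_invariant)
  also have "\<dots> = ennreal (pmf pi0 t * q t)" by (simp add: ennreal_pmf_pi0_qout)
  finally show "((\<lambda>u. pmf pi0 u * rt u t) has_sum (pmf pi0 t * q t)) UNIV"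
    by (rule has_sum_if_esum_ennreal_eq) (use rate_nonneg qout_pos[of t] infinite_UNIV_state in auto)
qed

lemma stationary_eq_pi0:
  assumes "stationary lam bet eps gam r \<pi>"
  shows "\<pi> = pi0"
proof -
  define \<mu> where "\<mu> u = ennreal (pmf \<pi> u * q u)" for u
  have inv: "esum (\<lambda>u. \<mu> u * P u t) = \<mu> t" for t
    unfolding \<mu>_def by (rule stationary_invariant[OF assms])
  have eq: "\<mu> t = \<mu> s0 * visits s0 t" for t
    by (rule invariant_eq_visits[OF inv _ return_prob_s0 reaches_s0]) (simp add: \<mu>_def)
  have pmf_eq: "ennreal (pmf \<pi> t) = \<mu> s0 * visits s0 t * ennreal (1 / q t)" for t
  proof -
    have "ennreal (pmf \<pi> t) = \<mu> t * ennreal (1 / q t)"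
      using qout_pos[of t] by (simp add: \<mu>_def ennreal_mult[symmetric] del: ennreal_mult)
    then show ?thesis using eq[of t] by simp
  qed
  have "1 = esum (\<lambda>t. ennreal (pmf \<pi> t))" by (simp add: esum_pmf)
  also have "\<dots> = \<mu> s0 * mean_return_time lam bet eps gam r s0"
    by (simp add: pmf_eq mean_return_time_eq esum_cmult mult.assoc)
  finally have one: "\<mu> s0 * ennreal cycle_len = 1" using cycle_len(1) by simp
  have "\<mu> s0 = \<mu> s0 * ennreal cycle_len * ennreal (1 / cycle_len)"
    using cycle_len(3) by (simp add: mult.assoc ennreal_mult[symmetric] del: ennreal_mult)
  then have \<mu>_s0: "\<mu> s0 = ennreal (1 / cycle_len)" using one by simp
  show ?thesis
  proof (rule pmf_eqI)
    fix t
    have "ennreal (pmf \<pi> t) = ennreal (stat_weight t)"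
      by (simp add: pmf_eq ennreal_stat_weight \<mu>_s0 mult.commute mult.left_commute)
    then show "pmf \<pi> t = pmf pi0 t" using stat_weight_nonneg[of t] by (simp add: pmf_pi0)
  qed
qed

lemma pos_recurrent_pi0:
  assumes "s \<in> set_pmf pi0"
  shows "pos_recurrent lam bet eps gam r s"
proof (rule pos_recurrent_if_subinvariant)
  let ?\<mu> = "\<lambda>u. ennreal (pmf pi0 u * q u)"
  show "esum (\<lambda>u. ?\<mu> u * P u t) \<le> ?\<mu> t" for t
    by (simp add: stationary_invariant[OF stationary_pi0])
  show "0 < ?\<mu> s"
    using assms qout_pos[of s] by (simp add: set_pmf_eq')
  show "esum ?\<mu> < \<infinity>"
    using esum_visits_s0_finite
    by (simp add: ennreal_pmf_pi0_qout esum_cmult_right ennreal_mult_less_top)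
  have "?\<mu> u * ennreal (1 / q u) = ennreal (pmf pi0 u)" for u
    using qout_pos[of u] by (simp add: ennreal_mult[symmetric] del: ennreal_mult)
  then show "esum (\<lambda>u. ?\<mu> u * ennreal (1 / q u)) < \<infinity>" by (simp add: esum_pmf)
qed

lemma s0_xc_bounds: "real (snd s0) \<ge> xc" "real (snd s0) \<le> xc + 1 + real gam"
proof -
  have "real (snd s0) = of_int \<lceil>xc\<rceil> + real gam" using xc_nonneg by (simp add: s0_def)
  then show "real (snd s0) \<ge> xc" "real (snd s0) \<le> xc + 1 + real gam"
    using ceiling_correct[of xc] by linarith+
qed

lemma lyap_s0_le: "lyap s0 \<le> (real gam + 1)^2"
proof -
  have "lyap s0 = (real (snd s0) - xc)^2" by (simp add: lyap_def s0_def)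
  also have "\<dots> \<le> (real gam + 1)^2" using s0_xc_bounds by (intro power_mono) auto
  finally show ?thesis .
qed

lemma qout_s0_le: "q s0 \<le> bet * (3 + real gam) * xc"
proof -
  have "q s0 \<le> lam * r + bet * real (snd s0)" using qout_le[of s0] by (simp add: s0_def)
  also have "\<dots> \<le> bet * xc + bet * (xc + 1 + real gam)"
    using s0_xc_bounds(2) bet_pos by (simp add: lam_r_eq)
  also have "\<dots> \<le> bet * (3 + real gam) * xc"
    using mult_left_mono[OF xc_ge_1, of "bet * (1 + real gam)"] bet_pos
    by (simp add: algebra_simps)
  finally show ?thesis .
qed

lemma lyap_div_cycle_len_le: "lyap s0 / cycle_len \<le> start_const bet gam * xc^2"
proof -
  have "1 \<le> cycle_len * q s0" using cycle_len(2) qout_pos[of s0] by (simp add: divide_le_eq)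
  from mult_left_mono[OF this lyap_nonneg[of s0]]
  have "lyap s0 \<le> lyap s0 * q s0 * cycle_len" by (simp add: mult_ac)
  then have "lyap s0 / cycle_len \<le> lyap s0 * q s0" using cycle_len(3) by (simp add: divide_le_eq)
  also have "\<dots> \<le> (real gam + 1)^2 * (bet * (3 + real gam) * xc)"
    using lyap_s0_le qout_s0_le lyap_nonneg[of s0] qout_pos[of s0] by (intro mult_mono) auto
  also have "\<dots> \<le> (real gam + 1)^2 * (bet * (3 + real gam) * xc) * xc"
    using mult_left_mono[OF xc_ge_1, of "(real gam + 1)^2 * (bet * (3 + real gam) * xc)"]
      bet_pos xc_nonneg by simp
  finally show ?thesis by (simp add: start_const_def power2_eq_square algebra_simps)
qed

text \<open>The comparison theorem with reward decay / q, divided by the mean cycle length.\<close>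
lemma stationary_decay_le:
  "esum (\<lambda>u. ennreal (pmf pi0 u * decay u)) \<le> ennreal (start_const bet gam * xc^2 + slack)"
proof -
  have "esum (\<lambda>u. visits s0 u * ennreal (decay u / q u))
      \<le> V s0 + esum (\<lambda>u. visits s0 u * ennreal (slack / q u))"
    by (rule visits_drift_bound)
      (rule jump_drift_bound[OF lyap_nonneg drift_lyap_le_slack decay_nonneg slack_nonneg])
  also have "esum (\<lambda>u. visits s0 u * ennreal (slack / q u)) = ennreal (cycle_len * slack)"
  proof -
    have "ennreal (slack / q u) = ennreal (1 / q u) * ennreal slack" for u
      using slack_nonneg qout_pos[of u] by (simp add: ennreal_mult[symmetric] del: ennreal_mult)
    then show ?thesis
      using cycle_len slack_nonneg
      by (simp add: mult.assoc[symmetric] esum_cmult_right mean_return_time_eq[symmetric] ennreal_mult)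
  qed
  finally have bound: "esum (\<lambda>u. visits s0 u * ennreal (decay u / q u))
      \<le> ennreal (lyap s0 + cycle_len * slack)"
    using lyap_nonneg[of s0] cycle_len slack_nonneg by (simp add: ennreal_plus[symmetric] del: ennreal_plus)
  have "ennreal (pmf pi0 u * decay u) = visits s0 u * ennreal (decay u / q u) * ennreal (1 / cycle_len)" for u
  proof -
    have "pmf pi0 u * decay u = enn2real (visits s0 u) * (decay u / q u) * (1 / cycle_len)"
      using qout_pos[of u] by (simp add: pmf_pi0 stat_weight_def)
    then show ?thesis
      using qout_pos[of u] decay_nonneg[of u] cycle_len(3)
      by (subst ennreal_visits_s0) (simp add: ennreal_mult[symmetric] del: ennreal_mult)
  qed
  then have "esum (\<lambda>u. ennreal (pmf pi0 u * decay u))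
      = esum (\<lambda>u. visits s0 u * ennreal (decay u / q u)) * ennreal (1 / cycle_len)"
    by (simp add: esum_cmult_right)
  also have "\<dots> \<le> ennreal (lyap s0 + cycle_len * slack) * ennreal (1 / cycle_len)"
    by (rule mult_right_mono[OF bound]) simp
  also have "\<dots> = ennreal ((lyap s0 + cycle_len * slack) * (1 / cycle_len))"
    by (rule ennreal_mult[symmetric]) (use cycle_len(3) lyap_nonneg[of s0] slack_nonneg in auto)
  also have "\<dots> = ennreal (lyap s0 / cycle_len + slack)"
    by (rule arg_cong[where f = ennreal]) (use cycle_len(3) in \<open>simp add: field_simps\<close>)
  also have "\<dots> \<le> ennreal (start_const bet gam * xc^2 + slack)"
    using lyap_div_cycle_len_le by (intro ennreal_leI) simp
  finally show ?thesis .
qed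

definition "tail_event L = {s. \<bar>fst (scaled lam bet r s)\<bar> > L \<or> \<bar>snd (scaled lam bet r s)\<bar> > L}"

lemma decay_ge_on_tail_event:
  assumes "u \<in> tail_event L" "L > 0"
  shows "decay u \<ge> eps * xc * L * r"
proof -
  have "\<bar>real_of_int (fst u)\<bar> / r > L \<or> \<bar>real (snd u) - xc\<bar> / r > L"
    using assms r_pos by (simp add: tail_event_def scaled_def xc_def abs_divide)
  then have "\<bar>real_of_int (fst u)\<bar> + \<bar>real (snd u) - xc\<bar> \<ge> L * r"
    using r_pos by (auto simp: less_divide_eq)
  then show ?thesis
    using eps_pos xc_ge_1 by (simp add: decay_def mult.assoc mult_left_mono)
qed

lemma indicator_tail_event_le:
  assumes L: "L > 0"
  shows "indicator (tail_event L) u \<le> ennreal (decay u / (eps * xc * L * r))"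
proof (cases "u \<in> tail_event L")
  case True
  moreover have "eps * xc * L * r > 0" using eps_pos xc_ge_1 L r_pos by simp
  ultimately have "decay u / (eps * xc * L * r) \<ge> 1" using decay_ge_on_tail_event[OF _ L, of u] by simp
  then show ?thesis using True by (simp add: ennreal_leI)
qed simp

lemma prob_tail_event_le:
  assumes L: "L > 0"
  shows "measure_pmf.prob pi0 (tail_event L)
    \<le> (start_const bet gam + drift_const bet eps gam) * lam / (bet * eps * L)"
proof -
  define D where "D = eps * xc * L * r"
  have D: "D > 0" using eps_pos xc_ge_1 L r_pos by (simp add: D_def)
  have pointwise: "ennreal (pmf pi0 u) * indicator (tail_event L) u
      \<le> ennreal (pmf pi0 u * decay u) * ennreal (1 / D)" for u
  proof -
    have "ennreal (pmf pi0 u) * indicator (tail_event L) u \<le> ennreal (pmf pi0 u) * ennreal (decay u / D)"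
      unfolding D_def by (rule mult_left_mono[OF indicator_tail_event_le[OF L]]) simp
    also have "\<dots> = ennreal (pmf pi0 u * decay u) * ennreal (1 / D)"
      using decay_nonneg[of u] D by (simp add: ennreal_mult[symmetric] del: ennreal_mult)
    finally show ?thesis .
  qed
  have "emeasure (measure_pmf pi0) (tail_event L)
      = esum (\<lambda>u. ennreal (pmf pi0 u) * indicator (tail_event L) u)"
    by (simp add: esum_def nn_integral_measure_pmf[symmetric])
  also have "\<dots> \<le> esum (\<lambda>u. ennreal (pmf pi0 u * decay u)) * ennreal (1 / D)"
    unfolding esum_cmult_right[symmetric] by (rule esum_mono[OF pointwise])
  also have "\<dots> \<le> ennreal (start_const bet gam * xc^2 + slack) * ennreal (1 / D)"
    by (rule mult_right_mono[OF stationary_decay_le]) simp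
  also have "\<dots> = ennreal ((start_const bet gam * xc^2 + slack) * (1 / D))"
    by (rule ennreal_mult[symmetric])
      (use D start_const_nonneg[of bet gam] bet_pos slack_nonneg in auto)
  also have "(start_const bet gam * xc^2 + slack) * (1 / D)
      = (start_const bet gam + drift_const bet eps gam) * lam / (bet * eps * L)"
    using D eps_pos L r_pos bet_pos lam_pos
    by (simp add: D_def slack_def xc_def power2_eq_square field_simps)
  finally show ?thesis
    using D start_const_nonneg[of bet gam] drift_const_nonneg[OF bet_pos eps_pos] lam_pos bet_pos eps_pos L
    by (simp add: measure_pmf.emeasure_eq_measure ennreal_le_iff)
qed

lemma unique_stationary_pos_recurrent:
  "(\<exists>!\<pi>. stationary lam bet eps gam r \<pi>)
   \<and> (\<forall>\<pi>. stationary lam bet eps gam r \<pi> \<longrightarrow> (\<forall>s\<in>set_pmf \<pi>. pos_recurrent lam bet eps gam r s))"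
  using stationary_pi0 stationary_eq_pi0 pos_recurrent_pi0 by blast

lemma prob_stationary_tail_le:
  assumes "stationary lam bet eps gam r \<pi>" "L > 0"
  shows "measure_pmf.prob \<pi> {s. \<bar>fst (scaled lam bet r s)\<bar> > L \<or> \<bar>snd (scaled lam bet r s)\<bar> > L}
    \<le> (start_const bet gam + drift_const bet eps gam) * lam / (bet * eps * L)"
  using prob_tail_event_le[OF assms(2)] stationary_eq_pi0[OF assms(1)] by (simp add: tail_event_def)

end

definition scale_threshold :: "real \<Rightarrow> real \<Rightarrow> real \<Rightarrow> real" where
  "scale_threshold lam bet eps = bet / lam * (1 + 2 * (bet + eps) / eps)"

lemma scale_threshold_pos: "lam > 0 \<Longrightarrow> bet > 0 \<Longrightarrow> eps > 0 \<Longrightarrow> scale_threshold lam bet eps > 0"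
  unfolding scale_threshold_def by (simp add: add_pos_pos)

lemma large_scale_if_ge_threshold:
  assumes pos: "lam > 0" "bet > 0" "eps > 0" "gam > 0" and r: "r \<ge> scale_threshold lam bet eps"
  shows "large_scale lam bet eps gam r"
proof -
  have "r > 0" using r scale_threshold_pos[OF pos(1-3)] by simp
  then interpret model lam bet eps gam r by unfold_locales (use pos in auto)
  have "xc \<ge> lam * scale_threshold lam bet eps / bet"
    using r pos by (simp add: xc_def divide_right_mono)
  also have "lam * scale_threshold lam bet eps / bet = 1 + 2 * (bet + eps) / eps"
    using pos by (simp add: scale_threshold_def)
  finally have xc: "xc \<ge> 1 + 2 * (bet + eps) / eps" .
  then have "eps * xc \<ge> eps * (1 + 2 * (bet + eps) / eps)" using pos by simp
  also have "eps * (1 + 2 * (bet + eps) / eps) = eps + 2 * (bet + eps)"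
    using pos by (simp add: field_simps)
  finally have "eps * xc \<ge> 2 * (bet + eps)" using pos by linarith
  moreover have "2 * (bet + eps) / eps \<ge> 0" using pos by simp
  then have "xc \<ge> 1" using xc by linarith
  ultimately show ?thesis by unfold_locales
qed

lemma stationary_tight:
  assumes pos: "lam > 0" "bet > 0" "eps > 0" "gam > 0" and e: "e > 0"
  shows "\<exists>M. \<forall>r\<ge>scale_threshold lam bet eps. \<forall>\<pi>. stationary lam bet eps gam r \<pi> \<longrightarrow>
    measure_pmf.prob \<pi> {s. \<bar>fst (scaled lam bet r s)\<bar> > M \<or> \<bar>snd (scaled lam bet r s)\<bar> > M} < e"
proof -
  define K where "K = (start_const bet gam + drift_const bet eps gam) * lam / (bet * eps)"
  define M where "M = 2 * K / e + 1"
  have "K \<ge> 0"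
    using pos drift_const_nonneg[of bet eps gam] start_const_nonneg[of bet gam] by (simp add: K_def)
  then have M: "M > 0" using e by (simp add: M_def add_nonneg_pos)
  have "e * M = 2 * K + e" using e by (simp add: M_def field_simps)
  then have "K / M < e" using M \<open>K \<ge> 0\<close> e by (simp add: divide_less_eq mult.commute)
  moreover have "measure_pmf.prob \<pi> {s. \<bar>fst (scaled lam bet r s)\<bar> > M
      \<or> \<bar>snd (scaled lam bet r s)\<bar> > M} \<le> K / M"
    if "r \<ge> scale_threshold lam bet eps" "stationary lam bet eps gam r \<pi>" for r \<pi>
    using large_scale.prob_stationary_tail_le[OF large_scale_if_ge_threshold[OF pos that(1)] that(2) M]
    by (simp add: K_def)
  ultimately show ?thesis by (meson le_less_trans)
qed

theorem lemma4:
  fixes lam bet eps :: real and gam :: nat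
  assumes "lam > 0" and "bet > 0" and "eps > 0" and "gam > 0"
    and "eps < real gam ^ 2 * bet / 4"
  shows "\<exists>R>0. (\<forall>r\<ge>R. (\<exists>!\<pi>. stationary lam bet eps gam r \<pi>)
                \<and> (\<forall>\<pi>. stationary lam bet eps gam r \<pi> \<longrightarrow>
                       (\<forall>s\<in>set_pmf \<pi>. pos_recurrent lam bet eps gam r s)))
           \<and> (\<forall>e>0. \<exists>M. \<forall>r\<ge>R. \<forall>\<pi>. stationary lam bet eps gam r \<pi> \<longrightarrow>
                 measure_pmf.prob \<pi> {s. \<bar>fst (scaled lam bet r s)\<bar> > M
                                       \<or> \<bar>snd (scaled lam bet r s)\<bar> > M} < e)"
proof -
  note pos = assms(1-4)
  have "(\<exists>!\<pi>. stationary lam bet eps gam r \<pi>)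
      \<and> (\<forall>\<pi>. stationary lam bet eps gam r \<pi> \<longrightarrow> (\<forall>s\<in>set_pmf \<pi>. pos_recurrent lam bet eps gam r s))"
    if "r \<ge> scale_threshold lam bet eps" for r
    by (rule large_scale.unique_stationary_pos_recurrent[OF large_scale_if_ge_threshold[OF pos that]])
  then show ?thesis using scale_threshold_pos[OF pos(1-3)] stationary_tight[OF pos] by auto
qed

end
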